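(* Let $(A,m,1,\Delta',\varepsilon,T)$ be a commutative Hopf algebra over a field $k$, with $\Delta'(a)=a_{1'}\otimes a_{2'}$. Assume that $(A,A)$ (both copies being this Hopf algebra) is a Hopf matched pair with coactions $\rho(a)=a_{(-1)}\otimes a_{(0)}$ and $\varphi(a)=a_{[0]}\otimes a_{[1]}$ such that for all $a\in A$ $$a_{1'}\otimes a_{2'}=a_{1'(-1)}a_{2'[0]}\otimes a_{1'(0)}a_{2'[1]}.$$ Then $(A,\Delta,\Delta')$ is a commutative Hopf brace, where the first Hopf algebra structure $(A,m,1,\Delta,\varepsilon,S)$ is given by $$\Delta(a)=a_1\otimes a_2=a_{1'}T(a_{2'(-1)})\otimes a_{2'(0)},\qquad S(a)=a_{(-1)}T(a_{(0)}),$$ for all $a\in A$.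
   Context: All objects are over a field $k$. Hopf matched pair: for Hopf algebras $A$ and $H$, a pair $(A,H)$ with linear maps $\rho:A\to H\otimes A$, $\rho(a)=a_{(-1)}\otimes a_{(0)}$, and $\varphi:H\to H\otimes A$, $\varphi(h)=h_{[0]}\otimes h_{[1]}$, such that $(A,\rho)$ is a left $H$-comodule algebra, $(H,\varphi)$ is a right $A$-comodule algebra (coactions are algebra maps), and for all $a\in A,h\in H$ (with comultiplications written $x_1\otimes x_2$): (HM1) $a_{(-1)}\varepsilon_A(a_{(0)})=\varepsilon_A(a)1_H$, $\varepsilon_H(h_{[0]})h_{[1]}=\varepsilon_H(h)1_A$; (HM2) $a_{(-1)}\otimes a_{(0)1}\otimes a_{(0)2}=a_{1(-1)}a_{2(-1)[0]}\otimes a_{1(0)}a_{2(-1)[1]}\otimes a_{2(0)}$; (HM3) $h_{[0]1}\otimes h_{[0]2}\otimes h_{[1]}=h_{1[0]}\otimes h_{1[1](-1)}h_{2[0]}\otimes h_{1[1](0)}h_{2[1]}$; (HM4) $h_{[0]}a_{(-1)}\otimes h_{[1]}a_{(0)}=a_{(-1)}h_{[0]}\otimes a_{(0)}h_{[1]}$. A Hopf brace $(A,\Delta,\Delta')$ consists of an algebra with two Hopf algebra structures $(A,m,1,\Delta,\varepsilon,S)$ and $(A,m,1,\Delta',\epsilon,T)$ such that for all $h$: $h_{1'}\otimes h_{2'1}\otimes h_{2'2}=h_{11'}S(h_2)h_{31'}\otimes h_{12'}\otimes h_{32'}$ (where $\Delta(h)=h_1\otimes h_2$, $\Delta'(h)=h_{1'}\otimes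 h_{2'}$ and e.g. $h_{31'}$ is $\Delta'$ applied to $h_3$); it is commutative if $A$ is commutative. *)

theory Defs
  imports Complex_Main
begin

text \<open>Elements of A\<otimes>A (resp. A\<otimes>A\<otimes>A) are represented by
finite formal sums of simple tensors, i.e. lists of pairs (resp. triples).
Two such formal sums denote the same tensor iff every k-bilinear (resp. trilinear)
form takes the same value on them (over a field, (A\<otimes>A)* = Bil(A,A;k) separates
points).\<close>

definition k_algebra :: "('k::field \<Rightarrow> 'a::ring_1 \<Rightarrow> 'a) \<Rightarrow> bool" where
  "k_algebra sc \<longleftrightarrow> Vector_Spaces.vector_space sc \<and>
     (\<forall>c x y. sc c (x * y) = sc c x * y) \<and> (\<forall>c x y. sc c (x * y) = x * sc c y)"

definition flin :: "('k::field \<Rightarrow> 'a::ring_1 \<Rightarrow> 'a) \<Rightarrow> ('a \<Rightarrow> 'k) \<Rightarrow> bool" where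
  "flin sc f \<longleftrightarrow> (\<forall>x y. f (x + y) = f x + f y) \<and> (\<forall>c x. f (sc c x) = c * f x)"

definition alin :: "('k::field \<Rightarrow> 'a::ring_1 \<Rightarrow> 'a) \<Rightarrow> ('a \<Rightarrow> 'a) \<Rightarrow> bool" where
  "alin sc f \<longleftrightarrow> (\<forall>x y. f (x + y) = f x + f y) \<and> (\<forall>c x. f (sc c x) = sc c (f x))"

definition bilin :: "('k::field \<Rightarrow> 'a::ring_1 \<Rightarrow> 'a) \<Rightarrow> ('a \<Rightarrow> 'a \<Rightarrow> 'k) \<Rightarrow> bool" where
  "bilin sc \<beta> \<longleftrightarrow> (\<forall>x. flin sc (\<beta> x)) \<and> (\<forall>y. flin sc (\<lambda>x. \<beta> x y))"

definition trilin :: "('k::field \<Rightarrow> 'a::ring_1 \<Rightarrow> 'a) \<Rightarrow> ('a \<Rightarrow> 'a \<Rightarrow> 'a \<Rightarrow> 'k) \<Rightarrow> bool" where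
  "trilin sc \<gamma> \<longleftrightarrow> (\<forall>x y. flin sc (\<gamma> x y)) \<and> (\<forall>x z. flin sc (\<lambda>y. \<gamma> x y z))
      \<and> (\<forall>y z. flin sc (\<lambda>x. \<gamma> x y z))"

definition teq2 :: "('k::field \<Rightarrow> 'a::ring_1 \<Rightarrow> 'a) \<Rightarrow> ('a \<times> 'a) list \<Rightarrow> ('a \<times> 'a) list \<Rightarrow> bool" where
  "teq2 sc s t \<longleftrightarrow> (\<forall>\<beta>. bilin sc \<beta> \<longrightarrow>
      sum_list (map (\<lambda>(x, y). \<beta> x y) s) = sum_list (map (\<lambda>(x, y). \<beta> x y) t))"

definition teq3 :: "('k::field \<Rightarrow> 'a::ring_1 \<Rightarrow> 'a) \<Rightarrow> ('a \<times> 'a \<times> 'a) list \<Rightarrow> ('a \<times> 'a \<times> 'a) list \<Rightarrow> bool" where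
  "teq3 sc s t \<longleftrightarrow> (\<forall>\<gamma>. trilin sc \<gamma> \<longrightarrow>
      sum_list (map (\<lambda>(x, y, z). \<gamma> x y z) s) = sum_list (map (\<lambda>(x, y, z). \<gamma> x y z) t))"

definition tmul2 :: "('a::ring_1 \<times> 'a) list \<Rightarrow> ('a \<times> 'a) list \<Rightarrow> ('a \<times> 'a) list" where
  "tmul2 s t = [(a * c, b * d). (a, b) \<leftarrow> s, (c, d) \<leftarrow> t]"

definition tlin2 :: "('k::field \<Rightarrow> 'a::ring_1 \<Rightarrow> 'a) \<Rightarrow> ('a \<Rightarrow> ('a \<times> 'a) list) \<Rightarrow> bool" where
  "tlin2 sc D \<longleftrightarrow> (\<forall>a b. teq2 sc (D (a + b)) (D a @ D b)) \<and>
     (\<forall>c a. teq2 sc (D (sc c a)) (map (\<lambda>(x, y). (sc c x, y)) (D a)))"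

definition hopf_algebra :: "('k::field \<Rightarrow> 'a::ring_1 \<Rightarrow> 'a) \<Rightarrow> ('a \<Rightarrow> ('a \<times> 'a) list)
    \<Rightarrow> ('a \<Rightarrow> 'k) \<Rightarrow> ('a \<Rightarrow> 'a) \<Rightarrow> bool" where
  "hopf_algebra sc D e S \<longleftrightarrow> k_algebra sc \<and> tlin2 sc D \<and> flin sc e \<and> alin sc S \<and>
     (\<forall>a. teq3 sc [(x, y1, y2). (x, y) \<leftarrow> D a, (y1, y2) \<leftarrow> D y]
                  [(x1, x2, y). (x, y) \<leftarrow> D a, (x1, x2) \<leftarrow> D x]) \<and>
     (\<forall>a. sum_list (map (\<lambda>(x, y). sc (e x) y) (D a)) = a) \<and>
     (\<forall>a. sum_list (map (\<lambda>(x, y). sc (e y) x) (D a)) = a) \<and>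
     (\<forall>a b. teq2 sc (D (a * b)) (tmul2 (D a) (D b))) \<and> teq2 sc (D 1) [(1, 1)] \<and>
     (\<forall>a b. e (a * b) = e a * e b) \<and> e 1 = 1 \<and>
     (\<forall>a. sum_list (map (\<lambda>(x, y). S x * y) (D a)) = sc (e a) 1) \<and>
     (\<forall>a. sum_list (map (\<lambda>(x, y). x * S y) (D a)) = sc (e a) 1)"

definition left_comodule_algebra :: "('k::field \<Rightarrow> 'a::ring_1 \<Rightarrow> 'a) \<Rightarrow> ('a \<Rightarrow> ('a \<times> 'a) list)
    \<Rightarrow> ('a \<Rightarrow> 'k) \<Rightarrow> ('a \<Rightarrow> ('a \<times> 'a) list) \<Rightarrow> bool" where
  "left_comodule_algebra sc DH eH rho \<longleftrightarrow> tlin2 sc rho \<and>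
     (\<forall>a. teq3 sc [(h1, h2, x). (h, x) \<leftarrow> rho a, (h1, h2) \<leftarrow> DH h]
                  [(h, y1, y2). (h, y) \<leftarrow> rho a, (y1, y2) \<leftarrow> rho y]) \<and>
     (\<forall>a. sum_list (map (\<lambda>(h, x). sc (eH h) x) (rho a)) = a) \<and>
     (\<forall>a b. teq2 sc (rho (a * b)) (tmul2 (rho a) (rho b))) \<and> teq2 sc (rho 1) [(1, 1)]"

definition right_comodule_algebra :: "('k::field \<Rightarrow> 'a::ring_1 \<Rightarrow> 'a) \<Rightarrow> ('a \<Rightarrow> ('a \<times> 'a) list)
    \<Rightarrow> ('a \<Rightarrow> 'k) \<Rightarrow> ('a \<Rightarrow> ('a \<times> 'a) list) \<Rightarrow> bool" where
  "right_comodule_algebra sc DA eA phi \<longleftrightarrow> tlin2 sc phi \<and>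
     (\<forall>h. teq3 sc [(g0, g1, x). (g, x) \<leftarrow> phi h, (g0, g1) \<leftarrow> phi g]
                  [(g, x1, x2). (g, x) \<leftarrow> phi h, (x1, x2) \<leftarrow> DA x]) \<and>
     (\<forall>h. sum_list (map (\<lambda>(g, x). sc (eA x) g) (phi h)) = h) \<and>
     (\<forall>a b. teq2 sc (phi (a * b)) (tmul2 (phi a) (phi b))) \<and> teq2 sc (phi 1) [(1, 1)]"

definition hopf_matched_pair :: "('k::field \<Rightarrow> 'a::ring_1 \<Rightarrow> 'a)
    \<Rightarrow> ('a \<Rightarrow> ('a \<times> 'a) list) \<Rightarrow> ('a \<Rightarrow> 'k) \<Rightarrow> ('a \<Rightarrow> 'a)
    \<Rightarrow> ('a \<Rightarrow> ('a \<times> 'a) list) \<Rightarrow> ('a \<Rightarrow> 'k) \<Rightarrow> ('a \<Rightarrow> 'a)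
    \<Rightarrow> ('a \<Rightarrow> ('a \<times> 'a) list) \<Rightarrow> ('a \<Rightarrow> ('a \<times> 'a) list) \<Rightarrow> bool" where
  "hopf_matched_pair sc DA eA SA DH eH SH rho phi \<longleftrightarrow>
     hopf_algebra sc DA eA SA \<and> hopf_algebra sc DH eH SH \<and>
     left_comodule_algebra sc DH eH rho \<and> right_comodule_algebra sc DA eA phi \<and>
     \<comment> \<open>HM1\<close>
     (\<forall>a. sum_list (map (\<lambda>(h, x). sc (eA x) h) (rho a)) = sc (eA a) 1) \<and>
     (\<forall>h. sum_list (map (\<lambda>(g, x). sc (eH g) x) (phi h)) = sc (eH h) 1) \<and>
     \<comment> \<open>HM2\<close>
     (\<forall>a. teq3 sc [(h, y1, y2). (h, y) \<leftarrow> rho a, (y1, y2) \<leftarrow> DA y]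
        [(u1 * g, v1 * w, v2). (a1, a2) \<leftarrow> DA a, (u1, v1) \<leftarrow> rho a1,
                               (u2, v2) \<leftarrow> rho a2, (g, w) \<leftarrow> phi u2]) \<and>
     \<comment> \<open>HM3\<close>
     (\<forall>h. teq3 sc [(g1, g2, x). (g, x) \<leftarrow> phi h, (g1, g2) \<leftarrow> DH g]
        [(g1, u * g2, v * x2). (h1, h2) \<leftarrow> DH h, (g1, x1) \<leftarrow> phi h1,
                               (u, v) \<leftarrow> rho x1, (g2, x2) \<leftarrow> phi h2]) \<and>
     \<comment> \<open>HM4\<close>
     (\<forall>a h. teq2 sc [(g * u, x * v). (g, x) \<leftarrow> phi h, (u, v) \<leftarrow> rho a]
                     [(u * g, v * x). (g, x) \<leftarrow> phi h, (u, v) \<leftarrow> rho a])"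

definition hopf_brace :: "('k::field \<Rightarrow> 'a::ring_1 \<Rightarrow> 'a)
    \<Rightarrow> ('a \<Rightarrow> ('a \<times> 'a) list) \<Rightarrow> ('a \<Rightarrow> 'k) \<Rightarrow> ('a \<Rightarrow> 'a)
    \<Rightarrow> ('a \<Rightarrow> ('a \<times> 'a) list) \<Rightarrow> ('a \<Rightarrow> 'k) \<Rightarrow> ('a \<Rightarrow> 'a) \<Rightarrow> bool" where
  "hopf_brace sc D e S D' e' T \<longleftrightarrow> hopf_algebra sc D e S \<and> hopf_algebra sc D' e' T \<and>
     (\<forall>h. teq3 sc [(x, y1, y2). (x, y) \<leftarrow> D' h, (y1, y2) \<leftarrow> D y]
        [(r1 * S s * q1, r2, q2). (p, q) \<leftarrow> D h, (r, s) \<leftarrow> D p,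
                                  (r1, r2) \<leftarrow> D' r, (q1, q2) \<leftarrow> D' q])"

definition commutative_hopf_brace :: "('k::field \<Rightarrow> 'a::ring_1 \<Rightarrow> 'a)
    \<Rightarrow> ('a \<Rightarrow> ('a \<times> 'a) list) \<Rightarrow> ('a \<Rightarrow> 'k) \<Rightarrow> ('a \<Rightarrow> 'a)
    \<Rightarrow> ('a \<Rightarrow> ('a \<times> 'a) list) \<Rightarrow> ('a \<Rightarrow> 'k) \<Rightarrow> ('a \<Rightarrow> 'a) \<Rightarrow> bool" where
  "commutative_hopf_brace sc D e S D' e' T \<longleftrightarrow> hopf_brace sc D e S D' e' T \<and>
     (\<forall>a b::'a. a * b = b * a)"

end

theory Submission
  imports Defs
begin

text \<open>
  The coproduct \<open>D a = a1' T(a2'(-1)) \<otimes> a2'(0)\<close> is an algebra map because \<open>\<rho>\<close>, \<open>\<Delta>'\<close> and,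
  \<open>A\<close> being commutative, \<open>T\<close> are. The crux is the formula
  \<open>D (T h) = T(h1'[0]) \<otimes> h1'[1] T(h2')\<close>: both sides are convolution inverses of \<open>D\<close>, the
  right-hand one by the factorisation hypothesis on \<open>\<Delta>'\<close>. Together with HM2 it yields
  coassociativity of \<open>D\<close>. The antipode \<open>S a = a(-1) T(a(0))\<close> is a multiplicative involution,
  and the inversion formulas \<open>\<Delta>' a = a1 a2(-1) \<otimes> a2(0)\<close> and \<open>\<rho> a = S(a1) a21' \<otimes> a22'\<close>
  (unprimed indices refer to \<open>D\<close>) reduce the brace identity to coassociativity of \<open>D\<close>.

  Identities in \<open>A\<close> are tested against all linear functionals, identities of formal tensors against
  all bilinear or trilinear forms, so every computation is a rearrangement of nested finite
  sums \<open>tsum\<close>.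
\<close>

definition tsum :: "('b \<times> 'c) list \<Rightarrow> ('b \<Rightarrow> 'c \<Rightarrow> 'd::comm_monoid_add) \<Rightarrow> 'd" where
  "tsum l f = sum_list (map (\<lambda>(x, y). f x y) l)"

lemma tsum_Nil [simp]: "tsum [] f = 0"
  by (simp add: tsum_def)

lemma tsum_Cons [simp]: "tsum ((a, b) # l) f = f a b + tsum l f"
  by (simp add: tsum_def)

lemma tsum_append [simp]: "tsum (l1 @ l2) f = tsum l1 f + tsum l2 f"
  by (simp add: tsum_def)

lemma tsum_concat [simp]: "tsum (concat (map g l)) f = sum_list (map (\<lambda>z. tsum (g z) f) l)"
  by (induction l) (auto simp: tsum_def)

lemma tsum_map [simp]: "tsum (map g l) f = sum_list (map (\<lambda>z. f (fst (g z)) (snd (g z))) l)"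
  by (induction l) (auto simp: tsum_def split: prod.splits)

lemma sum_list_map_pairs [simp]: "sum_list (map h (l :: ('b \<times> 'c) list)) = tsum l (\<lambda>x y. h (x, y))"
  by (simp add: tsum_def case_prod_beta')

lemma tsum_add: "tsum l (\<lambda>x y. f x y + g x y) = tsum l f + tsum l g"
  by (induction l) (auto simp: ac_simps)

lemma tsum_distrib_left: "(c::'d::semiring_0) * tsum l f = tsum l (\<lambda>x y. c * f x y)"
  by (induction l) (auto simp: algebra_simps)

lemma tsum_distrib_right: "tsum l f * (c::'d::semiring_0) = tsum l (\<lambda>x y. f x y * c)"
  by (induction l) (auto simp: algebra_simps)

lemma tsum_zero [simp]: "tsum l (\<lambda>x y. 0) = 0"
  by (induction l) auto

lemma tsum_swap: "tsum l (\<lambda>x y. tsum m (f x y)) = tsum m (\<lambda>u v. tsum l (\<lambda>x y. f x y u v))"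
  by (induction l) (auto simp: tsum_add)

lemma tsum_cong: "(\<And>x y. f x y = g x y) \<Longrightarrow> tsum l f = tsum l g"
  by (metis ext)

lemma eq_by_linear_functionals:
  fixes sc :: "'k::field \<Rightarrow> 'a::ring_1 \<Rightarrow> 'a"
  assumes "Vector_Spaces.vector_space sc" and "\<And>f. flin sc f \<Longrightarrow> f x = f y"
  shows "x = y"
proof (rule ccontr)
  interpret V: vector_space sc by fact
  assume "x \<noteq> y"
  then have indep: "V.independent {x - y}"
    by (simp add: V.independent_insert)
  define B where "B = V.extend_basis {x - y}"
  have B: "V.independent B" "V.span B = UNIV" "x - y \<in> B"
    unfolding B_def using V.independent_extend_basis[OF indep] V.span_extend_basis[OF indep]
      V.extend_basis_superset[OF indep] by auto
  define f where "f v = V.representation B v (x - y)" for v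
  have "flin sc f"
    unfolding flin_def f_def using V.representation_add V.representation_scale B by auto
  moreover have "f (x - y) = 1"
    unfolding f_def using V.representation_basis B by simp
  ultimately have "f x \<noteq> f y"
    by (metis flin_def diff_add_cancel add_cancel_left_left one_neq_zero)
  then show False using assms(2) \<open>flin sc f\<close> by blast
qed

lemma flin_sum_list: "flin sc f \<Longrightarrow> f (sum_list xs) = sum_list (map f xs)"
proof (induction xs)
  case Nil
  then have "f 0 = f 0 + f 0" by (metis add_0 flin_def)
  then show ?case by (metis add_cancel_left_right sum_list.Nil list.map(1))
next
  case (Cons a xs)
  then show ?case by (simp add: flin_def)
qed

lemma flin_tsum: "flin sc f \<Longrightarrow> f (tsum l g) = tsum l (\<lambda>x y. f (g x y))"
  by (simp add: tsum_def flin_sum_list o_def case_prod_beta' del: sum_list_map_pairs)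

lemma flin_scale: "flin sc f \<Longrightarrow> f (sc c x) = c * f x"
  by (simp add: flin_def)

lemma flin_tsumI: "(\<And>u v. flin sc (\<lambda>x. f x u v)) \<Longrightarrow> flin sc (\<lambda>x. tsum l (f x))"
  by (induction l) (auto simp: flin_def algebra_simps)

lemma flin_mult_left: "flin sc f \<Longrightarrow> flin sc (\<lambda>x. c * f x)"
  by (simp add: flin_def algebra_simps)

lemma flin_comp: "flin sc f \<Longrightarrow> alin sc g \<Longrightarrow> flin sc (\<lambda>x. f (g x))"
  by (simp add: flin_def alin_def)

lemma bilin_flin_left: "bilin sc \<beta> \<Longrightarrow> alin sc g \<Longrightarrow> flin sc (\<lambda>x. \<beta> (g x) c)"
  by (simp add: bilin_def flin_def alin_def)

lemma bilin_flin_right: "bilin sc \<beta> \<Longrightarrow> alin sc g \<Longrightarrow> flin sc (\<lambda>x. \<beta> c (g x))"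
  by (simp add: bilin_def flin_def alin_def)

lemma trilin_flin1: "trilin sc \<gamma> \<Longrightarrow> alin sc g \<Longrightarrow> flin sc (\<lambda>x. \<gamma> (g x) c d)"
  by (simp add: trilin_def flin_def alin_def)

lemma trilin_flin2: "trilin sc \<gamma> \<Longrightarrow> alin sc g \<Longrightarrow> flin sc (\<lambda>x. \<gamma> c (g x) d)"
  by (simp add: trilin_def flin_def alin_def)

lemma trilin_flin3: "trilin sc \<gamma> \<Longrightarrow> alin sc g \<Longrightarrow> flin sc (\<lambda>x. \<gamma> c d (g x))"
  by (simp add: trilin_def flin_def alin_def)

lemma bilinI: "(\<And>x. flin sc (\<beta> x)) \<Longrightarrow> (\<And>y. flin sc (\<lambda>x. \<beta> x y)) \<Longrightarrow> bilin sc \<beta>"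
  by (simp add: bilin_def)

lemma trilinI:
  "(\<And>x y. flin sc (\<gamma> x y)) \<Longrightarrow> (\<And>x z. flin sc (\<lambda>y. \<gamma> x y z)) \<Longrightarrow>
    (\<And>y z. flin sc (\<lambda>x. \<gamma> x y z)) \<Longrightarrow> trilin sc \<gamma>"
  by (simp add: trilin_def)

lemma alin_id: "alin sc (\<lambda>x. x)"
  by (simp add: alin_def)

lemma teq2D: "teq2 sc s t \<Longrightarrow> bilin sc \<beta> \<Longrightarrow> tsum s \<beta> = tsum t \<beta>"
  unfolding teq2_def by (simp add: tsum_def del: sum_list_map_pairs)

lemma teq2I: "(\<And>\<beta>. bilin sc \<beta> \<Longrightarrow> tsum s \<beta> = tsum t \<beta>) \<Longrightarrow> teq2 sc s t"
  unfolding teq2_def by (simp add: tsum_def del: sum_list_map_pairs)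

lemma teq3D:
  "teq3 sc s t \<Longrightarrow> trilin sc \<gamma> \<Longrightarrow>
    tsum s (\<lambda>x p. \<gamma> x (fst p) (snd p)) = tsum t (\<lambda>x p. \<gamma> x (fst p) (snd p))"
  unfolding teq3_def by (simp add: tsum_def case_prod_beta' del: sum_list_map_pairs)

lemma teq3I:
  "(\<And>\<gamma>. trilin sc \<gamma> \<Longrightarrow>
    tsum s (\<lambda>x p. \<gamma> x (fst p) (snd p)) = tsum t (\<lambda>x p. \<gamma> x (fst p) (snd p))) \<Longrightarrow> teq3 sc s t"
  unfolding teq3_def by (simp add: tsum_def case_prod_beta' del: sum_list_map_pairs)

lemma tlin2_add: "tlin2 sc D \<Longrightarrow> bilin sc \<beta> \<Longrightarrow> tsum (D (a + b)) \<beta> = tsum (D a) \<beta> + tsum (D b) \<beta>"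
  unfolding tlin2_def teq2_def by (simp add: tsum_def del: sum_list_map_pairs)

lemma tlin2_scale: "tlin2 sc D \<Longrightarrow> bilin sc \<beta> \<Longrightarrow> tsum (D (sc c a)) \<beta> = c * tsum (D a) \<beta>"
proof -
  assume D: "tlin2 sc D" and \<beta>: "bilin sc \<beta>"
  have "tsum (D (sc c a)) \<beta> = tsum (map (\<lambda>(x, y). (sc c x, y)) (D a)) \<beta>"
    using D \<beta> unfolding tlin2_def teq2_def by (simp add: tsum_def del: sum_list_map_pairs tsum_map)
  also have "\<dots> = tsum (D a) (\<lambda>x y. c * \<beta> x y)"
    using \<beta> by (simp add: case_prod_beta' bilin_def flin_def)
  finally show ?thesis by (simp add: tsum_distrib_left)
qed

lemma flin_tlin2: "tlin2 sc D \<Longrightarrow> bilin sc \<beta> \<Longrightarrow> alin sc g \<Longrightarrow> flin sc (\<lambda>x. tsum (D (g x)) \<beta>)"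
  by (simp add: flin_def alin_def tlin2_add tlin2_scale)

locale hopf_alg =
  fixes sc :: "'k::field \<Rightarrow> 'a::ring_1 \<Rightarrow> 'a"
    and D :: "'a \<Rightarrow> ('a \<times> 'a) list" and e :: "'a \<Rightarrow> 'k" and S :: "'a \<Rightarrow> 'a"
  assumes hopf: "hopf_algebra sc D e S"
begin

lemma k_algebra: "k_algebra sc"
  using hopf by (simp add: hopf_algebra_def)

lemma eq_by_flin: "(\<And>f. flin sc f \<Longrightarrow> f x = f y) \<Longrightarrow> x = y"
  using k_algebra eq_by_linear_functionals[of sc] unfolding k_algebra_def by blast

lemma tlin2_coprod: "tlin2 sc D"
  and flin_e: "flin sc e"
  and alin_antipode: "alin sc S"
  using hopf by (simp_all add: hopf_algebra_def)

lemma scale_mult_left: "sc c (x * y) = sc c x * y"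
  and scale_mult_right: "sc c (x * y) = x * sc c y"
  using k_algebra unfolding k_algebra_def by blast+

lemma alin_mult_left: "alin sc g \<Longrightarrow> alin sc (\<lambda>x. c * g x)"
  by (simp add: alin_def distrib_left flip: scale_mult_right)

lemma alin_mult_right: "alin sc g \<Longrightarrow> alin sc (\<lambda>x. g x * c)"
  by (simp add: alin_def distrib_right flip: scale_mult_left)

lemma alin_comp_antipode: "alin sc g \<Longrightarrow> alin sc (\<lambda>x. S (g x))"
  using alin_antipode by (simp add: alin_def)

lemma flin_comp_e: "alin sc g \<Longrightarrow> flin sc (\<lambda>x. e (g x))"
  using flin_e by (simp add: flin_def alin_def)

lemma flin_comp_coprod: "bilin sc \<beta> \<Longrightarrow> alin sc g \<Longrightarrow> flin sc (\<lambda>x. tsum (D (g x)) \<beta>)"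
  by (rule flin_tlin2[OF tlin2_coprod])

lemmas lin_intros = bilinI trilinI flin_tsumI flin_mult_left flin_comp_e flin_comp_coprod
  alin_id alin_comp_antipode alin_mult_left alin_mult_right

lemma coassoc:
  "trilin sc \<gamma> \<Longrightarrow> tsum (D a) (\<lambda>x y. tsum (D y) (\<gamma> x)) = tsum (D a) (\<lambda>x y. tsum (D x) (\<lambda>x1 x2. \<gamma> x1 x2 y))"
  using hopf teq3D[of sc "[(x, y1, y2). (x, y) \<leftarrow> D a, (y1, y2) \<leftarrow> D y]"
      "[(x1, x2, y). (x, y) \<leftarrow> D a, (x1, x2) \<leftarrow> D x]" \<gamma>]
  by (simp add: hopf_algebra_def)

lemma counit_left: "tsum (D a) (\<lambda>x y. sc (e x) y) = a"
  and counit_right: "tsum (D a) (\<lambda>x y. sc (e y) x) = a"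
  and antipode_left: "tsum (D a) (\<lambda>x y. S x * y) = sc (e a) 1"
  and antipode_right: "tsum (D a) (\<lambda>x y. x * S y) = sc (e a) 1"
  and counit_mult: "e (a * b) = e a * e b"
  and counit_one: "e 1 = 1"
  using hopf by (simp_all add: hopf_algebra_def tsum_def case_prod_beta' del: sum_list_map_pairs)

lemma coprod_mult:
  "bilin sc \<beta> \<Longrightarrow> tsum (D (a * b)) \<beta> = tsum (D a) (\<lambda>x y. tsum (D b) (\<lambda>u v. \<beta> (x * u) (y * v)))"
  using hopf teq2D[of sc "D (a * b)" "tmul2 (D a) (D b)" \<beta>] by (simp add: hopf_algebra_def tmul2_def)

lemma coprod_one: "bilin sc \<beta> \<Longrightarrow> tsum (D 1) \<beta> = \<beta> 1 1"
  using hopf teq2D[of sc "D 1" "[(1, 1)]" \<beta>] by (simp add: hopf_algebra_def)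

lemma counit_left_flin: "flin sc g \<Longrightarrow> tsum (D a) (\<lambda>x y. e x * g y) = g a"
  using flin_tsum[of sc g "D a" "\<lambda>x y. sc (e x) y"] by (simp add: counit_left flin_scale)

lemma counit_right_flin: "flin sc g \<Longrightarrow> tsum (D a) (\<lambda>x y. e y * g x) = g a"
  using flin_tsum[of sc g "D a" "\<lambda>x y. sc (e y) x"] by (simp add: counit_right flin_scale)

lemma antipode_left_flin: "flin sc g \<Longrightarrow> tsum (D a) (\<lambda>x y. g (S x * y)) = e a * g 1"
  using flin_tsum[of sc g "D a" "\<lambda>x y. S x * y"] by (simp add: antipode_left flin_scale)

lemma antipode_right_flin: "flin sc g \<Longrightarrow> tsum (D a) (\<lambda>x y. g (x * S y)) = e a * g 1"
  using flin_tsum[of sc g "D a" "\<lambda>x y. x * S y"] by (simp add: antipode_right flin_scale)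

lemma antipode_one: "S 1 = 1"
proof (rule eq_by_flin)
  fix f assume f: "flin sc f"
  have "f (S 1) = tsum (D 1) (\<lambda>x y. f (S x * y))"
    by (simp add: coprod_one lin_intros flin_comp[OF f])
  also have "\<dots> = f 1"
    using antipode_left_flin[OF f, of 1] by (simp add: counit_one)
  finally show "f (S 1) = f 1" .
qed

lemma counit_antipode: "e (S a) = e a"
proof -
  have "e (S a) = tsum (D a) (\<lambda>x y. e y * e (S x))"
    using counit_right_flin[of "\<lambda>z. e (S z)" a] by (simp add: lin_intros)
  also have "\<dots> = tsum (D a) (\<lambda>x y. e (S x * y))"
    by (simp add: counit_mult mult_ac)
  also have "\<dots> = e a"
    using antipode_left_flin[OF flin_e] by (simp add: counit_one)
  finally show ?thesis .
qed

end

locale comm_hopf_alg = hopf_alg sc D e S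
  for sc :: "'k::field \<Rightarrow> 'a::comm_ring_1 \<Rightarrow> 'a" and D e S
begin

lemma antipode_mult: "S (a * b) = S a * S b"
proof (rule eq_by_flin[symmetric])
  fix f assume f: "flin sc f"
  note L = lin_intros flin_comp[OF f]
  have "f (S a * S b) = tsum (D a) (\<lambda>a1 a2. tsum (D b) (\<lambda>b1 b2. e (a2 * b2) * f (S a1 * S b1)))"
    using counit_right_flin[of "\<lambda>z. f (S z * S b)" a]
      counit_right_flin[of "\<lambda>z. e a2 * f (S a1 * S z)" b for a1 a2]
    by (simp add: L counit_mult mult_ac)
  also have "\<dots> = tsum (D a) (\<lambda>a1 a2. tsum (D b) (\<lambda>b1 b2.
      tsum (D (a2 * b2)) (\<lambda>x y. f (x * S y * (S a1 * S b1)))))"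
    using antipode_right_flin[of "\<lambda>z. f (z * (S a1 * S b1))" "a2 * b2" for a1 a2 b1 b2] by (simp add: L)
  also have "\<dots> = tsum (D a) (\<lambda>a1 a2. tsum (D a2) (\<lambda>p q. tsum (D b) (\<lambda>b1 b2.
      tsum (D b2) (\<lambda>p' q'. f (p * p' * S (q * q') * (S a1 * S b1))))))"
    by (simp only: coprod_mult L, intro tsum_cong tsum_swap)
  also have "\<dots> = tsum (D a) (\<lambda>m q. tsum (D m) (\<lambda>a1 p. tsum (D b) (\<lambda>n q'.
      tsum (D n) (\<lambda>b1 p'. f (S b1 * p' * (p * S (q * q') * S a1))))))"
    by (simp only: coassoc L) (simp add: mult_ac)
  also have "\<dots> = tsum (D a) (\<lambda>m q. tsum (D m) (\<lambda>a1 p. f (S a1 * p * S (q * b))))"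
    using antipode_left_flin[of "\<lambda>z. f (z * (p * S (q * q') * S a1))" for p q q' a1]
      counit_left_flin[of "\<lambda>z. f (p * S (q * z) * S a1)" b for p q a1]
    by (simp add: L mult_ac)
  also have "\<dots> = f (S (a * b))"
    using antipode_left_flin[of "\<lambda>z. f (z * S (q * b))" for q] counit_left_flin[of "\<lambda>z. f (S (z * b))" a]
    by (simp add: L)
  finally show "f (S a * S b) = f (S (a * b))" .
qed

end

locale matched_pair_brace = comm_hopf_alg sc D' e T
  for sc :: "'k::field \<Rightarrow> 'a::comm_ring_1 \<Rightarrow> 'a" and D' e T +
  fixes rho phi :: "'a \<Rightarrow> ('a \<times> 'a) list"
  assumes matched_pair: "hopf_matched_pair sc D' e T D' e T rho phi"
    and factorization:
      "\<forall>a. teq2 sc (D' a) [(u * g, v * w). (x, y) \<leftarrow> D' a, (u, v) \<leftarrow> rho x, (g, w) \<leftarrow> phi y]"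
begin

lemma tlin2_rho: "tlin2 sc rho"
  and tlin2_phi: "tlin2 sc phi"
  using matched_pair
  by (simp_all add: hopf_matched_pair_def left_comodule_algebra_def right_comodule_algebra_def)

lemma flin_comp_rho: "bilin sc \<beta> \<Longrightarrow> alin sc g \<Longrightarrow> flin sc (\<lambda>x. tsum (rho (g x)) \<beta>)"
  by (rule flin_tlin2[OF tlin2_rho])

lemma flin_comp_phi: "bilin sc \<beta> \<Longrightarrow> alin sc g \<Longrightarrow> flin sc (\<lambda>x. tsum (phi (g x)) \<beta>)"
  by (rule flin_tlin2[OF tlin2_phi])

lemma rho_coassoc:
  "trilin sc \<gamma> \<Longrightarrow>
    tsum (rho a) (\<lambda>h x. tsum (D' h) (\<lambda>h1 h2. \<gamma> h1 h2 x)) = tsum (rho a) (\<lambda>h y. tsum (rho y) (\<gamma> h))"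
  using matched_pair teq3D[of sc "[(h1, h2, x). (h, x) \<leftarrow> rho a, (h1, h2) \<leftarrow> D' h]"
      "[(h, y1, y2). (h, y) \<leftarrow> rho a, (y1, y2) \<leftarrow> rho y]" \<gamma>]
  by (simp add: hopf_matched_pair_def left_comodule_algebra_def)

lemma rho_counit: "tsum (rho a) (\<lambda>h x. sc (e h) x) = a"
  and rho_counit_HM1: "tsum (rho a) (\<lambda>h x. sc (e x) h) = sc (e a) 1"
  using matched_pair
  by (simp_all add: hopf_matched_pair_def left_comodule_algebra_def tsum_def case_prod_beta'
      del: sum_list_map_pairs)

lemma rho_mult:
  "bilin sc \<beta> \<Longrightarrow> tsum (rho (a * b)) \<beta> = tsum (rho a) (\<lambda>x y. tsum (rho b) (\<lambda>u v. \<beta> (x * u) (y * v)))"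
  using matched_pair teq2D[of sc "rho (a * b)" "tmul2 (rho a) (rho b)" \<beta>]
  by (simp add: hopf_matched_pair_def left_comodule_algebra_def tmul2_def)

lemma rho_one: "bilin sc \<beta> \<Longrightarrow> tsum (rho 1) \<beta> = \<beta> 1 1"
  using matched_pair teq2D[of sc "rho 1" "[(1, 1)]" \<beta>]
  by (simp add: hopf_matched_pair_def left_comodule_algebra_def)

lemma HM2:
  "trilin sc \<gamma> \<Longrightarrow> tsum (rho a) (\<lambda>h y. tsum (D' y) (\<gamma> h)) =
    tsum (D' a) (\<lambda>a1 a2. tsum (rho a1) (\<lambda>u1 v1. tsum (rho a2) (\<lambda>u2 v2.
      tsum (phi u2) (\<lambda>g w. \<gamma> (u1 * g) (v1 * w) v2))))"
  using matched_pair teq3D[of sc "[(h, y1, y2). (h, y) \<leftarrow> rho a, (y1, y2) \<leftarrow> D' y]"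
      "[(u1 * g, v1 * w, v2). (a1, a2) \<leftarrow> D' a, (u1, v1) \<leftarrow> rho a1,
         (u2, v2) \<leftarrow> rho a2, (g, w) \<leftarrow> phi u2]" \<gamma>]
  by (simp add: hopf_matched_pair_def)

lemma coprod_factorization:
  "bilin sc \<beta> \<Longrightarrow>
    tsum (D' a) \<beta> = tsum (D' a) (\<lambda>x y. tsum (rho x) (\<lambda>u v. tsum (phi y) (\<lambda>g w. \<beta> (u * g) (v * w))))"
  using factorization teq2D[of sc "D' a"
      "[(u * g, v * w). (x, y) \<leftarrow> D' a, (u, v) \<leftarrow> rho x, (g, w) \<leftarrow> phi y]" \<beta>]
  by simp

lemma rho_counit_flin: "flin sc g \<Longrightarrow> tsum (rho a) (\<lambda>h x. e h * g x) = g a"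
  using flin_tsum[of sc g "rho a" "\<lambda>x y. sc (e x) y"] by (simp add: rho_counit flin_scale)

lemma rho_counit_HM1_flin: "flin sc g \<Longrightarrow> tsum (rho a) (\<lambda>h x. e x * g h) = e a * g 1"
  using flin_tsum[of sc g "rho a" "\<lambda>x y. sc (e y) x"] by (simp add: rho_counit_HM1 flin_scale)

definition D :: "'a \<Rightarrow> ('a \<times> 'a) list" where
  "D a = [(x * T u, v). (x, y) \<leftarrow> D' a, (u, v) \<leftarrow> rho y]"

definition S :: "'a \<Rightarrow> 'a" where
  "S a = tsum (rho a) (\<lambda>u v. u * T v)"

definition phi_twist :: "'a \<Rightarrow> ('a \<times> 'a) list" where
  "phi_twist a = [(g, w * T y). (x, y) \<leftarrow> D' a, (g, w) \<leftarrow> phi x]"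

lemma tsum_D: "tsum (D a) \<beta> = tsum (D' a) (\<lambda>x y. tsum (rho y) (\<lambda>u v. \<beta> (x * T u) v))"
  by (simp add: D_def)

lemma tsum_phi_twist: "tsum (phi_twist a) \<beta> = tsum (D' a) (\<lambda>x y. tsum (phi x) (\<lambda>g w. \<beta> g (w * T y)))"
  by (simp add: phi_twist_def)

lemma flin_S: "flin sc f \<Longrightarrow> f (S a) = tsum (rho a) (\<lambda>u v. f (u * T v))"
  by (simp add: S_def flin_tsum)

lemma flin_comp_D:
  assumes \<beta>: "bilin sc \<beta>" and "alin sc g"
  shows "flin sc (\<lambda>x. tsum (D (g x)) \<beta>)"
  unfolding tsum_D
  by (intro lin_intros flin_comp_rho bilin_flin_left[OF \<beta>] bilin_flin_right[OF \<beta>] assms(2))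

lemma flin_comp_phi_twist:
  assumes \<beta>: "bilin sc \<beta>" and "alin sc g"
  shows "flin sc (\<lambda>x. tsum (phi_twist (g x)) \<beta>)"
  unfolding tsum_phi_twist
  by (intro lin_intros flin_comp_phi bilin_flin_left[OF \<beta>] bilin_flin_right[OF \<beta>] assms(2))

lemma alin_S: "alin sc S"
proof -
  have "f (S (x + y)) = f (S x + S y) \<and> f (S (sc c x)) = f (sc c (S x))" if f: "flin sc f" for f x y c
  proof -
    have "bilin sc (\<lambda>u v. f (u * T v))"
      by (intro lin_intros flin_comp[OF f])
    then show ?thesis
      using f by (simp add: flin_S tlin2_add[OF tlin2_rho] tlin2_scale[OF tlin2_rho] flin_def)
  qed
  then show ?thesis
    unfolding alin_def by (blast intro: eq_by_flin)
qed

lemma alin_comp_S: "alin sc g \<Longrightarrow> alin sc (\<lambda>x. S (g x))"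
  using alin_S by (simp add: alin_def)

lemmas brace_lin_intros = lin_intros flin_comp_rho flin_comp_phi flin_comp_D flin_comp_phi_twist alin_comp_S

lemma D_mult:
  assumes \<beta>: "bilin sc \<beta>"
  shows "tsum (D (a * b)) \<beta> = tsum (D a) (\<lambda>x y. tsum (D b) (\<lambda>u v. \<beta> (x * u) (y * v)))"
proof -
  note L = brace_lin_intros bilin_flin_left[OF \<beta>] bilin_flin_right[OF \<beta>]
  have "tsum (D (a * b)) \<beta> = tsum (D' a) (\<lambda>x1 y1. tsum (D' b) (\<lambda>x2 y2. tsum (rho y1) (\<lambda>u1 v1.
      tsum (rho y2) (\<lambda>u2 v2. \<beta> (x1 * T u1 * (x2 * T u2)) (v1 * v2)))))"
    by (simp only: tsum_D coprod_mult rho_mult L) (simp add: antipode_mult mult_ac)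
  also have "\<dots> = tsum (D' a) (\<lambda>x1 y1. tsum (rho y1) (\<lambda>u1 v1. tsum (D' b) (\<lambda>x2 y2.
      tsum (rho y2) (\<lambda>u2 v2. \<beta> (x1 * T u1 * (x2 * T u2)) (v1 * v2)))))"
    by (intro tsum_cong tsum_swap)
  finally show ?thesis
    by (simp only: tsum_D)
qed

lemma D_one:
  assumes \<beta>: "bilin sc \<beta>"
  shows "tsum (D 1) \<beta> = \<beta> 1 1"
proof -
  have "tsum (D 1) \<beta> = \<beta> (1 * T 1) 1"
    by (simp only: tsum_D coprod_one rho_one brace_lin_intros bilin_flin_left[OF \<beta>] bilin_flin_right[OF \<beta>])
  then show ?thesis
    by (simp add: antipode_one)
qed

lemma D_convolution_antipode:
  assumes \<beta>: "bilin sc \<beta>"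
  shows "tsum (D' h) (\<lambda>h1 h2. tsum (D (T h1)) (\<lambda>p q. tsum (D h2) (\<lambda>p' q'. \<beta> (p * p') (q * q'))))
    = e h * \<beta> 1 1"
proof -
  have D: "flin sc (\<lambda>z. tsum (D z) \<beta>)"
    using flin_comp_D[OF \<beta> alin_id] .
  have "tsum (D' h) (\<lambda>h1 h2. tsum (D (T h1)) (\<lambda>p q. tsum (D h2) (\<lambda>p' q'. \<beta> (p * p') (q * q'))))
     = tsum (D (tsum (D' h) (\<lambda>h1 h2. T h1 * h2))) \<beta>"
    by (simp only: D_mult[OF \<beta>] flin_tsum[OF D])
  then show ?thesis
    by (simp add: antipode_left flin_scale[OF D] D_one \<beta>)
qed

lemma rho_D_phi_twist:
  assumes \<gamma>: "trilin sc \<gamma>"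
  shows "tsum (rho a) (\<lambda>h c. tsum (D c) (\<gamma> h)) =
    tsum (D' a) (\<lambda>a1 a2. tsum (rho a1) (\<lambda>u1 v1. tsum (rho a2) (\<lambda>k t.
      tsum (phi_twist k) (\<lambda>g w. \<gamma> (u1 * g) (v1 * w) t))))"
proof -
  note L = brace_lin_intros trilin_flin1[OF \<gamma>] trilin_flin2[OF \<gamma>] trilin_flin3[OF \<gamma>]
  have "tsum (rho a) (\<lambda>h c. tsum (D c) (\<gamma> h)) =
    tsum (D' a) (\<lambda>a1 a2. tsum (rho a1) (\<lambda>u1 v1. tsum (rho a2) (\<lambda>u2 v2. tsum (phi u2) (\<lambda>g w.
      tsum (rho v2) (\<lambda>s t. \<gamma> (u1 * g) (v1 * w * T s) t)))))"
    by (simp only: tsum_D HM2 L)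
  also have "\<dots> = tsum (D' a) (\<lambda>a1 a2. tsum (rho a1) (\<lambda>u1 v1. tsum (rho a2) (\<lambda>u2 v2.
      tsum (rho v2) (\<lambda>s t. tsum (phi u2) (\<lambda>g w. \<gamma> (u1 * g) (v1 * w * T s) t)))))"
    by (intro tsum_cong tsum_swap)
  also have "\<dots> = tsum (D' a) (\<lambda>a1 a2. tsum (rho a1) (\<lambda>u1 v1. tsum (rho a2) (\<lambda>k t.
      tsum (D' k) (\<lambda>k1 k2. tsum (phi k1) (\<lambda>g w. \<gamma> (u1 * g) (v1 * w * T k2) t)))))"
    by (simp only: rho_coassoc[symmetric] L)
  finally show ?thesis
    by (simp only: tsum_phi_twist mult.assoc)
qed

lemma D_convolution_phi_twist:
  assumes \<beta>: "bilin sc \<beta>"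
  shows "tsum (D' h) (\<lambda>h1 h2. tsum (D h1) (\<lambda>p q. tsum (phi_twist h2) (\<lambda>g w. \<beta> (p * T g) (q * w))))
    = e h * \<beta> 1 1"
proof -
  note L = brace_lin_intros bilin_flin_left[OF \<beta>] bilin_flin_right[OF \<beta>]
  have "tsum (D' h) (\<lambda>h1 h2. tsum (D h1) (\<lambda>p q. tsum (phi_twist h2) (\<lambda>g w. \<beta> (p * T g) (q * w))))
    = tsum (D' h) (\<lambda>h1 h2. tsum (D' h1) (\<lambda>x y. tsum (D' h2) (\<lambda>k1 k2. tsum (rho y) (\<lambda>u v.
        tsum (phi k1) (\<lambda>g w. \<beta> (x * T u * T g) (v * (w * T k2)))))))"
    by (simp only: tsum_D tsum_phi_twist, intro tsum_cong tsum_swap)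
  also have "\<dots> = tsum (D' h) (\<lambda>x r. tsum (D' r) (\<lambda>y h2. tsum (D' h2) (\<lambda>k1 k2. tsum (rho y) (\<lambda>u v.
        tsum (phi k1) (\<lambda>g w. \<beta> (x * T u * T g) (v * (w * T k2)))))))"
    by (simp only: coassoc[symmetric] L)
  also have "\<dots> = tsum (D' h) (\<lambda>x r. tsum (D' r) (\<lambda>m k2. tsum (D' m) (\<lambda>y k1. tsum (rho y) (\<lambda>u v.
        tsum (phi k1) (\<lambda>g w. \<beta> (x * T u * T g) (v * (w * T k2)))))))"
    by (rule tsum_cong, simp only: coassoc L)
  also have "\<dots> = tsum (D' h) (\<lambda>x r. tsum (D' r) (\<lambda>m k2. tsum (D' m) (\<lambda>y k1. \<beta> (x * T y) (k1 * T k2))))"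
    using coprod_factorization[of "\<lambda>X Y. \<beta> (x * T X) (Y * T k2)" m for x k2 m]
    by (simp add: L antipode_mult mult_ac)
  also have "\<dots> = tsum (D' h) (\<lambda>x r. tsum (D' r) (\<lambda>y n. tsum (D' n) (\<lambda>k1 k2. \<beta> (x * T y) (k1 * T k2))))"
    by (rule tsum_cong, simp only: coassoc[symmetric] L)
  also have "\<dots> = tsum (D' h) (\<lambda>x r. \<beta> (x * T r) 1)"
    using antipode_right_flin[of "\<lambda>z. \<beta> (x * T y) z" for x y] counit_right_flin[of "\<lambda>z. \<beta> (x * T z) 1" for x]
    by (simp add: L)
  also have "\<dots> = e h * \<beta> 1 1"
    using antipode_right_flin[of "\<lambda>z. \<beta> z 1"] by (simp add: L)
  finally show ?thesis .
qed

text \<open>\<open>D \<circ> T\<close> is a left and \<open>(T \<otimes> id) \<circ> phi_twist\<close> a right convolution inverse of \<open>D\<close>, so they agree.\<close>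

lemma D_antipode:
  assumes \<beta>: "bilin sc \<beta>"
  shows "tsum (D (T h)) \<beta> = tsum (phi_twist h) (\<lambda>g w. \<beta> (T g) w)"
proof -
  note L = brace_lin_intros bilin_flin_left[OF \<beta>] bilin_flin_right[OF \<beta>]
  have "tsum (D (T h)) \<beta> = tsum (D' h) (\<lambda>h1 h2. tsum (D (T h1)) (\<lambda>p q. e h2 * \<beta> p q))"
    using counit_right_flin[of "\<lambda>z. tsum (D (T z)) \<beta>" h] by (simp add: L tsum_distrib_left)
  also have "\<dots> = tsum (D' h) (\<lambda>h1 h2. tsum (D (T h1)) (\<lambda>p q. tsum (D' h2) (\<lambda>c1 c2.
      tsum (D c1) (\<lambda>r s. tsum (phi_twist c2) (\<lambda>g w. \<beta> (p * (r * T g)) (q * (s * w)))))))"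
    using D_convolution_phi_twist[of "\<lambda>X Y. \<beta> (p * X) (q * Y)" h2 for p q h2] by (simp add: L)
  also have "\<dots> = tsum (D' h) (\<lambda>h1 h2. tsum (D' h2) (\<lambda>c1 c2. tsum (D (T h1)) (\<lambda>p q.
      tsum (D c1) (\<lambda>r s. tsum (phi_twist c2) (\<lambda>g w. \<beta> (p * (r * T g)) (q * (s * w)))))))"
    by (intro tsum_cong tsum_swap)
  also have "\<dots> = tsum (D' h) (\<lambda>m c2. tsum (D' m) (\<lambda>h1 c1. tsum (D (T h1)) (\<lambda>p q.
      tsum (D c1) (\<lambda>r s. tsum (phi_twist c2) (\<lambda>g w. \<beta> (p * (r * T g)) (q * (s * w)))))))"
    by (simp only: coassoc L)
  also have "\<dots> = tsum (D' h) (\<lambda>m c2. e m * tsum (phi_twist c2) (\<lambda>g w. \<beta> (T g) w))"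
    using D_convolution_antipode[of "\<lambda>X Y. tsum (phi_twist c2) (\<lambda>g w. \<beta> (X * T g) (Y * w))" m for c2 m]
    by (simp add: L mult_ac)
  also have "\<dots> = tsum (phi_twist h) (\<lambda>g w. \<beta> (T g) w)"
    using counit_left_flin[of "\<lambda>z. tsum (phi_twist z) (\<lambda>g w. \<beta> (T g) w)" h] by (simp add: L)
  finally show ?thesis .
qed

lemma D_coassoc:
  assumes \<gamma>: "trilin sc \<gamma>"
  shows "tsum (D a) (\<lambda>x y. tsum (D y) (\<gamma> x)) = tsum (D a) (\<lambda>x y. tsum (D x) (\<lambda>x1 x2. \<gamma> x1 x2 y))"
proof -
  note L = brace_lin_intros trilin_flin1[OF \<gamma>] trilin_flin2[OF \<gamma>] trilin_flin3[OF \<gamma>]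
  have "tsum (D a) (\<lambda>x y. tsum (D y) (\<gamma> x)) = tsum (D' a) (\<lambda>x y. tsum (D' y) (\<lambda>c1 c2.
      tsum (rho c2) (\<lambda>u v. tsum (rho c1) (\<lambda>u1 v1. tsum (phi_twist u) (\<lambda>g w. \<gamma> (x * T u1 * T g) (v1 * w) v)))))"
    by (simp only: tsum_D[of a] rho_D_phi_twist L antipode_mult mult.assoc, intro tsum_cong tsum_swap)
  also have "\<dots> = tsum (D' a) (\<lambda>a1 a2. tsum (D' a1) (\<lambda>a11 a12. tsum (rho a2) (\<lambda>u v.
      tsum (rho a12) (\<lambda>u1 v1. tsum (phi_twist u) (\<lambda>g w. \<gamma> (a11 * T u1 * T g) (v1 * w) v)))))"
    by (simp only: coassoc[symmetric] L)
  also have "\<dots> = tsum (D' a) (\<lambda>a1 a2. tsum (rho a2) (\<lambda>u v. tsum (D' a1) (\<lambda>a11 a12.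
      tsum (rho a12) (\<lambda>u1 v1. tsum (phi_twist u) (\<lambda>g w. \<gamma> (a11 * T u1 * T g) (v1 * w) v)))))"
    by (intro tsum_cong tsum_swap)
  also have "\<dots> = tsum (D' a) (\<lambda>a1 a2. tsum (rho a2) (\<lambda>u v. tsum (D a1) (\<lambda>q1 q2.
      tsum (phi_twist u) (\<lambda>g w. \<gamma> (q1 * T g) (q2 * w) v))))"
    by (simp only: tsum_D)
  also have "\<dots> = tsum (D' a) (\<lambda>a1 a2. tsum (rho a2) (\<lambda>u v. tsum (D (a1 * T u)) (\<lambda>p1 p2. \<gamma> p1 p2 v)))"
    by (simp only: D_antipode D_mult L)
  also have "\<dots> = tsum (D a) (\<lambda>x y. tsum (D x) (\<lambda>x1 x2. \<gamma> x1 x2 y))"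
    by (simp only: tsum_D[of a])
  finally show ?thesis .
qed

lemma D_counit_left_flin: "flin sc g \<Longrightarrow> tsum (D a) (\<lambda>x y. e x * g y) = g a"
proof -
  assume g: "flin sc g"
  have "tsum (D a) (\<lambda>x y. e x * g y) = tsum (D' a) (\<lambda>a1 a2. tsum (rho a2) (\<lambda>u v. e u * (e a1 * g v)))"
    by (simp add: tsum_D counit_mult counit_antipode mult_ac)
  also have "\<dots> = g a"
    using rho_counit_flin[of "\<lambda>z. e a1 * g z" for a1] counit_left_flin[OF g]
    by (simp add: brace_lin_intros g)
  finally show ?thesis .
qed

lemma D_counit_right_flin: "flin sc g \<Longrightarrow> tsum (D a) (\<lambda>x y. e y * g x) = g a"
proof -
  assume g: "flin sc g"
  have "tsum (D a) (\<lambda>x y. e y * g x) = tsum (D' a) (\<lambda>a1 a2. tsum (rho a2) (\<lambda>u v. e v * g (a1 * T u)))"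
    by (simp add: tsum_D)
  also have "\<dots> = g a"
    using rho_counit_HM1_flin[of "\<lambda>z. g (a1 * T z)" for a1] counit_right_flin[OF g]
    by (simp add: brace_lin_intros flin_comp[OF g] antipode_one)
  finally show ?thesis .
qed

lemma D_counit_left: "tsum (D a) (\<lambda>x y. sc (e x) y) = a"
  and D_counit_right: "tsum (D a) (\<lambda>x y. sc (e y) x) = a"
  using D_counit_left_flin D_counit_right_flin
  by (auto intro!: eq_by_flin simp: flin_tsum flin_scale)

lemma S_mult: "S (a * b) = S a * S b"
proof (rule eq_by_flin)
  fix f assume f: "flin sc f"
  note L = brace_lin_intros flin_comp[OF f]
  have "f (S (a * b)) = tsum (rho b) (\<lambda>u' v'. tsum (rho a) (\<lambda>u v. f (u * u' * T (v * v'))))"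
    by (simp only: flin_S[OF f] rho_mult L, rule tsum_swap)
  also have "\<dots> = f (S a * S b)"
    by (simp add: S_def tsum_distrib_left tsum_distrib_right flin_tsum[OF f] antipode_mult mult_ac)
  finally show "f (S (a * b)) = f (S a * S b)" .
qed

lemma S_one: "S 1 = 1"
proof (rule eq_by_flin)
  fix f assume f: "flin sc f"
  show "f (S 1) = f 1"
    by (simp add: flin_S[OF f] rho_one brace_lin_intros flin_comp[OF f] antipode_one)
qed

lemma D_antipode_right: "tsum (D a) (\<lambda>x y. x * S y) = sc (e a) 1"
proof (rule eq_by_flin)
  fix f assume f: "flin sc f"
  note L = brace_lin_intros flin_comp[OF f]
  have "f (tsum (D a) (\<lambda>x y. x * S y))
    = tsum (D' a) (\<lambda>a1 a2. tsum (rho a2) (\<lambda>u v. tsum (rho v) (\<lambda>s t. f (a1 * T u * (s * T t)))))"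
    by (simp add: tsum_D S_def tsum_distrib_left flin_tsum[OF f])
  also have "\<dots> = tsum (D' a) (\<lambda>a1 a2. tsum (rho a2) (\<lambda>k t. tsum (D' k) (\<lambda>u s. f (a1 * T u * (s * T t)))))"
    by (simp only: rho_coassoc[symmetric] L)
  also have "\<dots> = tsum (D' a) (\<lambda>a1 a2. f (a1 * T a2))"
    using antipode_left_flin[of "\<lambda>z. f (z * (a1 * T t))" for a1 t] rho_counit_flin[of "\<lambda>z. f (a1 * T z)" for a1]
    by (simp add: L mult_ac)
  also have "\<dots> = f (sc (e a) 1)"
    using antipode_right_flin[OF f] by (simp add: flin_scale[OF f])
  finally show "f (tsum (D a) (\<lambda>x y. x * S y)) = f (sc (e a) 1)" .
qed

lemma D_antipode_right_flin: "flin sc g \<Longrightarrow> tsum (D a) (\<lambda>x y. g (x * S y)) = e a * g 1"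
  using flin_tsum[of sc g "D a" "\<lambda>x y. x * S y"] by (simp add: D_antipode_right flin_scale)

lemma S_involutive: "S (S a) = a"
proof (rule eq_by_flin)
  fix f assume f: "flin sc f"
  note L = brace_lin_intros flin_comp[OF f]
  have "f (S (S a)) = tsum (D a) (\<lambda>x y. tsum (D x) (\<lambda>x1 x2. f (x1 * S x2 * S (S y))))"
    using D_counit_left_flin[of "\<lambda>z. f (S (S z))" a] D_antipode_right_flin[of "\<lambda>z. f (z * S (S y))" x for x y]
    by (simp add: L)
  also have "\<dots> = tsum (D a) (\<lambda>x y. tsum (D y) (\<lambda>y1 y2. f (x * S (y1 * S y2))))"
    by (simp only: D_coassoc[symmetric] L) (simp add: S_mult mult.assoc)
  also have "\<dots> = f a"
    using D_antipode_right_flin[of "\<lambda>z. f (x * S z)" for x] D_counit_right_flin[OF f] by (simp add: L S_one)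
  finally show "f (S (S a)) = f a" .
qed

lemma D_antipode_left: "tsum (D a) (\<lambda>x y. S x * y) = sc (e a) 1"
proof (rule eq_by_flin)
  fix f assume f: "flin sc f"
  have "f (tsum (D a) (\<lambda>x y. S x * y)) = tsum (D a) (\<lambda>x y. f (S (x * S y)))"
    by (simp add: flin_tsum[OF f] S_mult S_involutive)
  also have "\<dots> = f (sc (e a) 1)"
    using D_antipode_right_flin[of "\<lambda>z. f (S z)" a] by (simp add: brace_lin_intros flin_comp[OF f] S_one flin_scale[OF f])
  finally show "f (tsum (D a) (\<lambda>x y. S x * y)) = f (sc (e a) 1)" .
qed

lemma D_antipode_left_flin: "flin sc g \<Longrightarrow> tsum (D a) (\<lambda>x y. g (S x * y)) = e a * g 1"
  using flin_tsum[of sc g "D a" "\<lambda>x y. S x * y"] by (simp add: D_antipode_left flin_scale)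

lemma coprod_eq_D_rho:
  assumes \<beta>: "bilin sc \<beta>"
  shows "tsum (D' a) \<beta> = tsum (D a) (\<lambda>p q. tsum (rho q) (\<lambda>u v. \<beta> (p * u) v))"
proof -
  note L = brace_lin_intros bilin_flin_left[OF \<beta>] bilin_flin_right[OF \<beta>]
  have "tsum (D a) (\<lambda>p q. tsum (rho q) (\<lambda>u v. \<beta> (p * u) v))
     = tsum (D' a) (\<lambda>a1 a2. tsum (rho a2) (\<lambda>h t. tsum (D' h) (\<lambda>k u. \<beta> (a1 * T k * u) t)))"
    by (simp only: tsum_D rho_coassoc[symmetric] L)
  also have "\<dots> = tsum (D' a) \<beta>"
    using antipode_left_flin[of "\<lambda>z. \<beta> (a1 * z) t" for a1 t] rho_counit_flin[of "\<lambda>z. \<beta> a1 z" for a1]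
    by (simp add: L mult_ac)
  finally show ?thesis by simp
qed

lemma rho_convolution_antipode:
  assumes \<beta>: "bilin sc \<beta>"
  shows "tsum (D' c) (\<lambda>c1 c2. tsum (rho (T c1)) (\<lambda>p q. tsum (rho c2) (\<lambda>p' q'. \<beta> (p * p') (q * q'))))
    = e c * \<beta> 1 1"
proof -
  have rho: "flin sc (\<lambda>z. tsum (rho z) \<beta>)"
    using flin_comp_rho[OF \<beta> alin_id] .
  have "tsum (D' c) (\<lambda>c1 c2. tsum (rho (T c1)) (\<lambda>p q. tsum (rho c2) (\<lambda>p' q'. \<beta> (p * p') (q * q'))))
     = tsum (rho (tsum (D' c) (\<lambda>c1 c2. T c1 * c2))) \<beta>"
    by (simp only: rho_mult[OF \<beta>] flin_tsum[OF rho])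
  then show ?thesis
    by (simp add: antipode_left flin_scale[OF rho] rho_one \<beta>)
qed

lemma rho_convolution_phi_twist:
  assumes \<beta>: "bilin sc \<beta>"
  shows "tsum (D' c) (\<lambda>c1 c2. tsum (rho c1) (\<lambda>p q. tsum (phi_twist c2) (\<lambda>g w. \<beta> (p * g) (q * w)))) = \<beta> c 1"
proof -
  note L = brace_lin_intros bilin_flin_left[OF \<beta>] bilin_flin_right[OF \<beta>]
  have "tsum (D' c) (\<lambda>c1 c2. tsum (rho c1) (\<lambda>p q. tsum (phi_twist c2) (\<lambda>g w. \<beta> (p * g) (q * w))))
    = tsum (D' c) (\<lambda>c1 c2. tsum (D' c2) (\<lambda>d1 d2. tsum (rho c1) (\<lambda>p q.
        tsum (phi d1) (\<lambda>g w. \<beta> (p * g) (q * (w * T d2))))))"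
    by (simp only: tsum_phi_twist, intro tsum_cong tsum_swap)
  also have "\<dots> = tsum (D' c) (\<lambda>m d2. tsum (D' m) (\<lambda>c1 d1. tsum (rho c1) (\<lambda>p q.
        tsum (phi d1) (\<lambda>g w. \<beta> (p * g) (q * (w * T d2))))))"
    by (simp only: coassoc L)
  also have "\<dots> = tsum (D' c) (\<lambda>m d2. tsum (D' m) (\<lambda>m1 m2. \<beta> m1 (m2 * T d2)))"
    using coprod_factorization[of "\<lambda>X Y. \<beta> X (Y * T d2)" m for d2 m] by (simp add: L mult_ac)
  also have "\<dots> = tsum (D' c) (\<lambda>c1 c2. tsum (D' c2) (\<lambda>m2 d2. \<beta> c1 (m2 * T d2)))"
    by (simp only: coassoc[symmetric] L)
  also have "\<dots> = \<beta> c 1"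
    using antipode_right_flin[of "\<lambda>z. \<beta> c1 z" for c1] counit_right_flin[of "\<lambda>z. \<beta> z 1" c]
    by (simp add: L)
  finally show ?thesis .
qed

text \<open>\<open>\<rho> \<circ> T\<close> is a left convolution inverse of \<open>\<rho>\<close>, and \<open>\<rho> * phi_twist = id \<otimes> 1\<close>.\<close>

lemma phi_twist_eq:
  assumes \<beta>: "bilin sc \<beta>"
  shows "tsum (phi_twist f) \<beta> = tsum (D' f) (\<lambda>f1 f2. tsum (rho (T f1)) (\<lambda>p q. \<beta> (p * f2) q))"
proof -
  note L = brace_lin_intros bilin_flin_left[OF \<beta>] bilin_flin_right[OF \<beta>]
  have "tsum (phi_twist f) \<beta> = tsum (D' f) (\<lambda>f1 f2. tsum (D' f1) (\<lambda>x1 x2. tsum (rho (T x1)) (\<lambda>p q.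
      tsum (rho x2) (\<lambda>p' q'. tsum (phi_twist f2) (\<lambda>g w. \<beta> (p * p' * g) (q * q' * w))))))"
    using counit_left_flin[of "\<lambda>z. tsum (phi_twist z) \<beta>" f]
      rho_convolution_antipode[of "\<lambda>X Y. tsum (phi_twist f2) (\<lambda>g w. \<beta> (X * g) (Y * w))" f1 for f1 f2]
    by (simp add: L)
  also have "\<dots> = tsum (D' f) (\<lambda>x1 y. tsum (D' y) (\<lambda>x2 f2. tsum (rho (T x1)) (\<lambda>p q.
      tsum (rho x2) (\<lambda>p' q'. tsum (phi_twist f2) (\<lambda>g w. \<beta> (p * p' * g) (q * q' * w))))))"
    by (simp only: coassoc[symmetric] L)
  also have "\<dots> = tsum (D' f) (\<lambda>x1 y. tsum (rho (T x1)) (\<lambda>p q. tsum (D' y) (\<lambda>x2 f2.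
      tsum (rho x2) (\<lambda>p' q'. tsum (phi_twist f2) (\<lambda>g w. \<beta> (p * p' * g) (q * q' * w))))))"
    by (intro tsum_cong tsum_swap)
  also have "\<dots> = tsum (D' f) (\<lambda>x1 y. tsum (rho (T x1)) (\<lambda>p q. \<beta> (p * y) q))"
    using rho_convolution_phi_twist[of "\<lambda>X Y. \<beta> (p * X) (q * Y)" y for p q y] by (simp add: L mult_ac)
  finally show ?thesis .
qed

lemma rho_D:
  assumes \<gamma>: "trilin sc \<gamma>"
  shows "tsum (rho a) (\<lambda>h c. tsum (D c) (\<gamma> h))
    = tsum (D a) (\<lambda>b1 b2. tsum (rho b1) (\<lambda>u1 v1. tsum (rho b2) (\<lambda>u2 v2. \<gamma> (u1 * u2) v1 v2)))"
proof -
  note L = brace_lin_intros trilin_flin1[OF \<gamma>] trilin_flin2[OF \<gamma>] trilin_flin3[OF \<gamma>]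
  have "tsum (rho a) (\<lambda>h c. tsum (D c) (\<gamma> h)) = tsum (D' a) (\<lambda>a1 a2. tsum (rho a2) (\<lambda>k t.
      tsum (rho a1) (\<lambda>u1 v1. tsum (D' k) (\<lambda>k1 k2. tsum (rho (T k1)) (\<lambda>p q. \<gamma> (u1 * (p * k2)) (v1 * q) t)))))"
    by (simp only: rho_D_phi_twist phi_twist_eq L, intro tsum_cong tsum_swap)
  also have "\<dots> = tsum (D' a) (\<lambda>a1 a2. tsum (rho a2) (\<lambda>k t. tsum (D' k) (\<lambda>k1 k2.
      tsum (rho a1) (\<lambda>u1 v1. tsum (rho (T k1)) (\<lambda>p q. \<gamma> (u1 * (p * k2)) (v1 * q) t)))))"
    by (intro tsum_cong tsum_swap)
  also have "\<dots> = tsum (D' a) (\<lambda>a1 a2. tsum (rho a2) (\<lambda>k t. tsum (rho t) (\<lambda>k2 v2.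
      tsum (rho a1) (\<lambda>u1 v1. tsum (rho (T k)) (\<lambda>p q. \<gamma> (u1 * (p * k2)) (v1 * q) v2)))))"
    by (simp only: rho_coassoc L)
  also have "\<dots> = tsum (D' a) (\<lambda>a1 a2. tsum (rho a2) (\<lambda>k t. tsum (rho a1) (\<lambda>u1 v1.
      tsum (rho t) (\<lambda>k2 v2. tsum (rho (T k)) (\<lambda>p q. \<gamma> (u1 * (p * k2)) (v1 * q) v2)))))"
    by (intro tsum_cong tsum_swap)
  also have "\<dots> = tsum (D' a) (\<lambda>a1 a2. tsum (rho a2) (\<lambda>k t. tsum (rho a1) (\<lambda>u1 v1.
      tsum (rho (T k)) (\<lambda>p q. tsum (rho t) (\<lambda>k2 v2. \<gamma> (u1 * p * k2) (v1 * q) v2)))))"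
    by (simp only: mult.assoc, intro tsum_cong tsum_swap)
  also have "\<dots> = tsum (D a) (\<lambda>b1 b2. tsum (rho b1) (\<lambda>u1 v1. tsum (rho b2) (\<lambda>u2 v2. \<gamma> (u1 * u2) v1 v2)))"
    by (simp only: rho_mult tsum_D L)
  finally show ?thesis .
qed

lemma rho_eq_S_coprod:
  assumes \<beta>: "bilin sc \<beta>"
  shows "tsum (rho m) \<beta> = tsum (D m) (\<lambda>s q. tsum (D' q) (\<lambda>q1 q2. \<beta> (S s * q1) q2))"
proof -
  note L = brace_lin_intros bilin_flin_left[OF \<beta>] bilin_flin_right[OF \<beta>]
  have "tsum (D m) (\<lambda>s q. tsum (D' q) (\<lambda>q1 q2. \<beta> (S s * q1) q2))
     = tsum (D m) (\<lambda>n r. tsum (D n) (\<lambda>s p. tsum (rho r) (\<lambda>u v. \<beta> (S s * (p * u)) v)))"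
    by (simp only: coprod_eq_D_rho D_coassoc L)
  also have "\<dots> = tsum (rho m) \<beta>"
    using D_antipode_left_flin[of "\<lambda>z. tsum (rho r) (\<lambda>u v. \<beta> (z * u) v)" for r]
      D_counit_left_flin[of "\<lambda>z. tsum (rho z) \<beta>" m]
    by (simp add: L mult_ac)
  finally show ?thesis by simp
qed

lemma brace_identity:
  assumes \<gamma>: "trilin sc \<gamma>"
  shows "tsum (D' h) (\<lambda>x y. tsum (D y) (\<gamma> x)) = tsum (D h) (\<lambda>p q. tsum (D p) (\<lambda>r s.
    tsum (D' r) (\<lambda>r1 r2. tsum (D' q) (\<lambda>q1 q2. \<gamma> (r1 * S s * q1) r2 q2))))"
proof -
  note L = brace_lin_intros trilin_flin1[OF \<gamma>] trilin_flin2[OF \<gamma>] trilin_flin3[OF \<gamma>]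
  have "tsum (D' h) (\<lambda>x y. tsum (D y) (\<gamma> x)) = tsum (D h) (\<lambda>n b2. tsum (D n) (\<lambda>p b1.
      tsum (rho b1) (\<lambda>u1 v1. tsum (rho b2) (\<lambda>u2 v2. \<gamma> (p * (u1 * u2)) v1 v2))))"
    by (simp only: coprod_eq_D_rho rho_D D_coassoc L)
  also have "\<dots> = tsum (D h) (\<lambda>n b2. tsum (D' n) (\<lambda>r1 r2. tsum (rho b2) (\<lambda>u2 v2. \<gamma> (r1 * u2) r2 v2)))"
    using coprod_eq_D_rho[of "\<lambda>X Y. tsum (rho b2) (\<lambda>u2 v2. \<gamma> (X * u2) Y v2)" n for b2 n] by (simp add: L mult_ac)
  also have "\<dots> = tsum (D h) (\<lambda>r m. tsum (D m) (\<lambda>s q. tsum (D' r) (\<lambda>r1 r2.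
      tsum (D' q) (\<lambda>q1 q2. \<gamma> (r1 * S s * q1) r2 q2))))"
    using rho_eq_S_coprod[of "\<lambda>X Y. \<gamma> (r1 * X) r2 Y" m for r1 r2 m]
    by (simp add: L mult_ac, intro tsum_cong tsum_swap)
  also have "\<dots> = tsum (D h) (\<lambda>p q. tsum (D p) (\<lambda>r s. tsum (D' r) (\<lambda>r1 r2.
      tsum (D' q) (\<lambda>q1 q2. \<gamma> (r1 * S s * q1) r2 q2))))"
    by (simp only: D_coassoc[symmetric] L)
  finally show ?thesis .
qed

lemma tlin2_D: "tlin2 sc D"
proof -
  have "tsum (D (a + b)) \<beta> = tsum (D a @ D b) \<beta>"
    and "tsum (D (sc c a)) \<beta> = tsum (map (\<lambda>(x, y). (sc c x, y)) (D a)) \<beta>"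
    if \<beta>: "bilin sc \<beta>" for a b c \<beta>
    using flin_comp_D[OF \<beta> alin_id] \<beta>
    by (simp_all add: flin_def bilin_def case_prod_beta' tsum_distrib_left)
  then show ?thesis
    unfolding tlin2_def by (blast intro: teq2I)
qed

lemma hopf_algebra_D: "hopf_algebra sc D e S"
  unfolding hopf_algebra_def
  using k_algebra tlin2_D flin_e alin_S counit_mult counit_one
    D_counit_left D_counit_right D_antipode_left D_antipode_right
  by (auto intro!: teq2I teq3I simp: D_coassoc D_mult D_one tmul2_def)

theorem commutative_hopf_brace_D: "commutative_hopf_brace sc D e S D' e T"
  unfolding commutative_hopf_brace_def hopf_brace_def
  using hopf_algebra_D hopf by (auto intro!: teq3I simp: brace_identity mult.commute)

end

theorem proposition3p4:
  fixes sc :: "'k::field \<Rightarrow> 'a::comm_ring_1 \<Rightarrow> 'a"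
    and D' :: "'a \<Rightarrow> ('a \<times> 'a) list" and e :: "'a \<Rightarrow> 'k" and T :: "'a \<Rightarrow> 'a"
    and rho :: "'a \<Rightarrow> ('a \<times> 'a) list" and phi :: "'a \<Rightarrow> ('a \<times> 'a) list"
  assumes "hopf_algebra sc D' e T"
    and "hopf_matched_pair sc D' e T D' e T rho phi"
    and "\<forall>a. teq2 sc (D' a) [(u * g, v * w). (x, y) \<leftarrow> D' a, (u, v) \<leftarrow> rho x, (g, w) \<leftarrow> phi y]"
  shows "commutative_hopf_brace sc
           (\<lambda>a. [(x * T u, v). (x, y) \<leftarrow> D' a, (u, v) \<leftarrow> rho y]) e
           (\<lambda>a. sum_list (map (\<lambda>(u, v). u * T v) (rho a)))
           D' e T"
proof -
  interpret matched_pair_brace sc D' e T rho phi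
    using assms by unfold_locales
  have "(\<lambda>a. [(x * T u, v). (x, y) \<leftarrow> D' a, (u, v) \<leftarrow> rho y]) = D"
    by (simp add: fun_eq_iff D_def)
  moreover have "(\<lambda>a. sum_list (map (\<lambda>(u, v). u * T v) (rho a))) = S"
    by (simp add: fun_eq_iff S_def tsum_def del: sum_list_map_pairs)
  ultimately show ?thesis
    using commutative_hopf_brace_D by simp
qed

end
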